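(* Let $0<a<1$ be a constant and let $k_1\ge k_2\ge\cdots\ge k_n$ and $\ell_1\ge\ell_2\ge\cdots\ge\ell_n$ be non-negative integers such that $\sum_{i=1}^j k_i\le\sum_{i=1}^j\ell_i$ for every $j\le n$ and $\sum_{i=1}^n k_i=\sum_{i=1}^n\ell_i$. Let $X=\sum_{i=1}^n X_i$ and $Y=\sum_{i=1}^n Y_i$, where $X_1,\dots,X_n$ are independent indicator random variables with $\Pr[X_i=1]=a^{k_i}$ and $Y_1,\dots,Y_n$ are independent indicator random variables with $\Pr[Y_i=1]=a^{\ell_i}$. Then for every integer $M$, $\Pr[X\ge M]\le\Pr[Y\ge M]$. *)

theory Defs
  imports "HOL-Probability.Probability"
begin

definition indicator_vector :: "real \<Rightarrow> (nat \<Rightarrow> nat) \<Rightarrow> nat \<Rightarrow> (nat \<Rightarrow> bool) pmf" where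
  "indicator_vector a k n = Pi_pmf {1..n} False (\<lambda>i. bernoulli_pmf (a ^ k i))"

definition sum_tail_prob :: "real \<Rightarrow> (nat \<Rightarrow> nat) \<Rightarrow> nat \<Rightarrow> int \<Rightarrow> real" where
  "sum_tail_prob a k n M =
     measure_pmf.prob (indicator_vector a k n)
       {\<omega>. M \<le> (\<Sum>i=1..n. of_bool (\<omega> i) :: int)}"

end

(*
  Put p_i = a^k_i. Moving one unit of exponent from a later index j to an earlier index i with
  k_j \<le> k_i + 1 keeps p_i p_j fixed and does not decrease p_i + p_j, because
  a^(k_i+1) + a^(k_j-1) \<ge> a^k_i + a^k_j. Conditioned on the remaining coordinates,
  Pr[X \<ge> M] is affine in p_i + p_j and p_i p_j and nondecreasing in the sum, so such a move
  cannot decrease the tail probability. A non-increasing k majorized by l is turned into l by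
  finitely many such moves, each keeping k non-increasing and majorized by l while strictly
  decreasing the total gap of the partial sums.
*)

theory Submission
  imports Defs
begin

definition tail_prob :: "'a set \<Rightarrow> ('a \<Rightarrow> real) \<Rightarrow> int \<Rightarrow> real" where
  "tail_prob A p M = measure_pmf.prob (Pi_pmf A False (\<lambda>i. bernoulli_pmf (p i)))
       {\<omega>. M \<le> (\<Sum>i\<in>A. of_bool (\<omega> i) :: int)}"

lemma tail_prob_cong: "(\<And>i. i \<in> A \<Longrightarrow> p i = q i) \<Longrightarrow> tail_prob A p M = tail_prob A q M"
  unfolding tail_prob_def by (subst Pi_pmf_cong[where f' = "\<lambda>i. bernoulli_pmf (q i)"]) auto

lemma tail_prob_antimono: "tail_prob A p M \<le> tail_prob A p (M - 1)"
  unfolding tail_prob_def by (rule measure_pmf.finite_measure_mono) auto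

lemma tail_prob_insert:
  assumes "finite A" "x \<notin> A" "0 \<le> p x" "p x \<le> 1"
  shows "tail_prob (insert x A) p M = p x * tail_prob A p (M - 1) + (1 - p x) * tail_prob A p M"
proof -
  let ?P = "Pi_pmf A False (\<lambda>i. bernoulli_pmf (p i))"
  let ?S = "{\<omega>. M \<le> (\<Sum>i\<in>insert x A. of_bool (\<omega> i) :: int)}"
  let ?N = "\<lambda>y. map_pmf (\<lambda>f. f(x := y)) ?P"
  let ?m = "\<lambda>y. measure_pmf.prob ?P {\<omega>. M - of_bool y \<le> (\<Sum>i\<in>A. of_bool (\<omega> i) :: int)}"
  have Pi_insert: "Pi_pmf (insert x A) False (\<lambda>i. bernoulli_pmf (p i)) = bernoulli_pmf (p x) \<bind> ?N"
    using assms by (simp add: Pi_pmf_insert' map_pmf_def)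
  have "(\<Sum>i\<in>A. of_bool ((f(x := y)) i) :: int) = (\<Sum>i\<in>A. of_bool (f i))" for f y
    using assms(2) by (intro sum.cong) auto
  then have "(\<Sum>i\<in>insert x A. of_bool ((f(x := y)) i) :: int) = of_bool y + (\<Sum>i\<in>A. of_bool (f i))" for f y
    by (simp only: sum.insert[OF assms(1,2)] fun_upd_same)
  then have prob_N: "measure_pmf.prob (?N y) ?S = ?m y" for y
    by (simp add: vimage_def algebra_simps)
  have "ennreal (tail_prob (insert x A) p M) = emeasure (measure_pmf (bernoulli_pmf (p x) \<bind> ?N)) ?S"
    unfolding tail_prob_def Pi_insert by (simp add: measure_pmf.emeasure_eq_measure)
  also have "\<dots> = (\<integral>\<^sup>+y. emeasure (measure_pmf (?N y)) ?S \<partial>bernoulli_pmf (p x))"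
    by simp
  also have "\<dots> = ennreal (?m True) * ennreal (p x) + ennreal (?m False) * ennreal (1 - p x)"
    unfolding measure_pmf.emeasure_eq_measure prob_N
    by (rule nn_integral_bernoulli_pmf[OF assms(3,4)]) simp
  also have "\<dots> = ennreal (?m True * p x + ?m False * (1 - p x))"
    using assms(3,4) by (simp add: ennreal_mult)
  finally have "tail_prob (insert x A) p M = ?m True * p x + ?m False * (1 - p x)"
    using assms(3,4) by (subst (asm) ennreal_inj) (auto simp: tail_prob_def)
  then show ?thesis
    by (simp add: tail_prob_def mult.commute)
qed

lemma tail_prob_mono_pair:
  assumes "finite A" "i \<in> A" "j \<in> A" "i \<noteq> j"
    and "0 \<le> p i" "p i \<le> 1" "0 \<le> p j" "p j \<le> 1"
    and "0 \<le> q i" "q i \<le> 1" "0 \<le> q j" "q j \<le> 1"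
    and outside: "\<And>x. x \<in> A - {i, j} \<Longrightarrow> p x = q x"
    and same_product: "p i * p j = q i * q j" and larger_sum: "p i + p j \<le> q i + q j"
  shows "tail_prob A p M \<le> tail_prob A q M"
proof -
  define B where "B = A - {i, j}"
  have A: "A = insert i (insert j B)" and B: "finite B" "i \<notin> insert j B" "j \<notin> B"
    using assms(1-4) by (auto simp: B_def)
  define u v w where "u = tail_prob B q (M - 2)" and "v = tail_prob B q (M - 1)" and "w = tail_prob B q M"
  have "v \<le> u" "w \<le> v"
    unfolding u_def v_def w_def using tail_prob_antimono[of B q "M - 1"] tail_prob_antimono[of B q M] by simp_all
  have expand: "tail_prob A r M = w + (r i + r j) * (v - w) + (r i * r j) * (u - 2 * v + w)"
    if "\<And>x. x \<in> B \<Longrightarrow> r x = q x" "0 \<le> r i" "r i \<le> 1" "0 \<le> r j" "r j \<le> 1" for r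
  proof -
    have "tail_prob B r N = tail_prob B q N" for N
      using that(1) by (rule tail_prob_cong)
    then show ?thesis
      unfolding A using B that(2-5)
      by (simp add: tail_prob_insert u_def v_def w_def algebra_simps)
  qed
  have "(p i + p j) * (v - w) \<le> (q i + q j) * (v - w)"
    using larger_sum \<open>w \<le> v\<close> by (intro mult_right_mono) auto
  then show ?thesis
    using expand[of p] expand[of q] assms(5-12) outside same_product by (simp add: B_def)
qed

definition shift_unit :: "('a \<Rightarrow> nat) \<Rightarrow> 'a \<Rightarrow> 'a \<Rightarrow> 'a \<Rightarrow> nat" where
  "shift_unit k j i = k(i := Suc (k i), j := k j - 1)"

lemma tail_prob_le_shift_unit:
  fixes a :: real
  assumes a: "0 < a" "a < 1" and "finite A" "i \<in> A" "j \<in> A" "i \<noteq> j"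
    and k: "k j = Suc t" "t \<le> k i"
  shows "tail_prob A (\<lambda>r. a ^ k r) M \<le> tail_prob A (\<lambda>r. a ^ shift_unit k j i r) M"
proof (rule tail_prob_mono_pair)
  have "(1 - a) * a ^ k i \<le> (1 - a) * a ^ t"
    using a k by (intro mult_left_mono power_decreasing) auto
  then show "a ^ k i + a ^ k j \<le> a ^ shift_unit k j i i + a ^ shift_unit k j i j"
    using assms by (simp add: shift_unit_def algebra_simps)
  show "a ^ k i * a ^ k j = a ^ shift_unit k j i i * a ^ shift_unit k j i j"
    using assms by (simp add: shift_unit_def power_add[symmetric])
qed (use assms power_le_one[of a "Suc t"] power_le_one[of a "Suc (k i)"]
     in \<open>auto simp: shift_unit_def power_le_one\<close>)

definition partial_sum :: "(nat \<Rightarrow> nat) \<Rightarrow> nat \<Rightarrow> int" where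
  "partial_sum k m = (\<Sum>r=1..m. int (k r))"

lemma partial_sum_0 [simp]: "partial_sum k 0 = 0"
  by (simp add: partial_sum_def)

lemma partial_sum_Suc [simp]: "partial_sum k (Suc m) = partial_sum k m + int (k (Suc m))"
  by (simp add: partial_sum_def)

lemma partial_sum_shift_unit:
  assumes "1 \<le> i" "1 \<le> j" "i \<noteq> j" "0 < k j"
  shows "partial_sum (shift_unit k j i) m = partial_sum k m + of_bool (i \<le> m) - of_bool (j \<le> m)"
  using assms by (induction m) (auto simp: shift_unit_def le_Suc_eq)

definition majorized_by :: "nat \<Rightarrow> (nat \<Rightarrow> nat) \<Rightarrow> (nat \<Rightarrow> nat) \<Rightarrow> bool" where
  "majorized_by n k l \<longleftrightarrow>
     (\<forall>m\<le>n. partial_sum k m \<le> partial_sum l m) \<and> partial_sum k n = partial_sum l n"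

definition majorization_gap :: "nat \<Rightarrow> (nat \<Rightarrow> nat) \<Rightarrow> (nat \<Rightarrow> nat) \<Rightarrow> nat" where
  "majorization_gap n k l = (\<Sum>m=1..n. nat (partial_sum l m - partial_sum k m))"

lemma majorized_by_pivots:
  assumes k: "antimono_on {1..n} k" and l: "antimono_on {1..n} l" and kl: "majorized_by n k l"
    and "\<exists>r\<in>{1..n}. k r \<noteq> l r"
  obtains i j where "1 \<le> i" "i < j" "j \<le> n" "l j < k j"
    "\<And>m. i \<le> m \<Longrightarrow> m < j \<Longrightarrow> partial_sum k m < partial_sum l m"
    "\<And>r. 1 \<le> r \<Longrightarrow> r < i \<Longrightarrow> Suc (k i) \<le> k r"
    "\<And>s. j < s \<Longrightarrow> s \<le> n \<Longrightarrow> Suc (k s) \<le> k j"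
proof -
  have partial_sum_le: "partial_sum k m \<le> partial_sum l m" if "m \<le> n" for m
    using kl that by (simp add: majorized_by_def)
  have "\<exists>r\<in>{1..n}. l r < k r"
  proof (rule ccontr)
    assume "\<not> ?thesis"
    then have le: "int (k r) \<le> int (l r)" if "r \<in> {1..n}" for r
      using that by (meson linorder_not_le of_nat_le_iff)
    have "(\<Sum>r=1..n. int (k r)) = (\<Sum>r=1..n. int (l r))"
      using kl by (simp add: majorized_by_def partial_sum_def)
    then have "int (k r) = int (l r)" if "r \<in> {1..n}" for r
      using sum_mono_inv[OF _ le that] by simp
    with assms(4) show False by auto
  qed
  then obtain r0 where r0: "r0 \<in> {1..n}" "l r0 < k r0" ..
  define j where "j = (GREATEST r. r \<in> {1..n} \<and> l r < k r)"
  have "j \<in> {1..n} \<and> l j < k j"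
    unfolding j_def by (rule GreatestI_nat[of _ r0 n]) (use r0 in auto)
  then have j: "j \<in> {1..n}" "l j < k j" by auto
  have after_j: "k s \<le> l s" if "j < s" "s \<le> n" for s
  proof (rule ccontr)
    assume "\<not> k s \<le> l s"
    then have "s \<le> j"
      unfolding j_def by (intro Greatest_le_nat[of _ s n]) (use that j in auto)
    with that show False by simp
  qed
  obtain j0 where j0: "j = Suc j0"
    using j by (cases j) auto
  have "partial_sum k j0 < partial_sum l j0"
    using partial_sum_le[of j] j unfolding j0 by simp
  define i0 where "i0 = (GREATEST m. m < j \<and> partial_sum k m = partial_sum l m)"
  have "i0 < j \<and> partial_sum k i0 = partial_sum l i0"
    unfolding i0_def by (rule GreatestI_nat[of _ 0 j]) (use j in auto)
  then have i0: "i0 < j" "partial_sum k i0 = partial_sum l i0" by auto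
  have strict: "partial_sum k m < partial_sum l m" if "i0 < m" "m < j" for m
  proof (rule ccontr)
    assume "\<not> partial_sum k m < partial_sum l m"
    then have "partial_sum k m = partial_sum l m"
      using partial_sum_le[of m] that j by simp
    then have "m \<le> i0"
      unfolding i0_def by (intro Greatest_le_nat[of _ m j]) (use that in auto)
    with that show False by simp
  qed
  have "i0 < j0"
    using i0 \<open>partial_sum k j0 < partial_sum l j0\<close> unfolding j0 by (cases "i0 = j0") auto
  have k_less_l: "k (Suc i0) < l (Suc i0)"
    using strict[of "Suc i0"] i0 \<open>i0 < j0\<close> unfolding j0 by simp
  have before: "Suc (k (Suc i0)) \<le> k r" if r: "1 \<le> r" "r < Suc i0" for r
  proof -
    obtain i1 where i1: "i0 = Suc i1"
      using r by (cases i0) auto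
    have "l i0 \<le> k i0"
      using partial_sum_le[of i1] i0 j unfolding i1 by simp
    moreover have "l (Suc i0) \<le> l i0" "k i0 \<le> k r"
      using monotone_onD[OF l] monotone_onD[OF k] r i0 j \<open>i0 < j0\<close> unfolding j0 by auto
    ultimately show ?thesis
      using k_less_l by linarith
  qed
  have after: "Suc (k s) \<le> k j" if "j < s" "s \<le> n" for s
    using after_j[OF that] monotone_onD[OF l, of j s] j that by auto
  show ?thesis
    using that[of "Suc i0" j] strict before after j \<open>i0 < j0\<close> unfolding j0 by auto
qed

lemma shift_unit_at_pivots:
  assumes k: "antimono_on {1..n} k" and kl: "majorized_by n k l"
    and ij: "1 \<le> i" "i < j" "j \<le> n" "l j < k j"
    and strict: "\<And>m. i \<le> m \<Longrightarrow> m < j \<Longrightarrow> partial_sum k m < partial_sum l m"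
    and before: "\<And>r. 1 \<le> r \<Longrightarrow> r < i \<Longrightarrow> Suc (k i) \<le> k r"
    and after: "\<And>s. j < s \<Longrightarrow> s \<le> n \<Longrightarrow> Suc (k s) \<le> k j"
  shows "antimono_on {1..n} (shift_unit k j i)"
    and "majorized_by n (shift_unit k j i) l"
    and "majorization_gap n (shift_unit k j i) l < majorization_gap n k l"
proof -
  let ?k' = "shift_unit k j i"
  have ki: "k j \<le> k i"
    using monotone_onD[OF k, of i j] ij by auto
  show "antimono_on {1..n} ?k'"
  proof (rule monotone_onI)
    fix r s assume "r \<in> {1..n}" "s \<in> {1..n}" "r \<le> s"
    then show "?k' s \<le> ?k' r"
      using monotone_onD[OF k, of r s] before[of r] after[of s] ij ki
      by (auto simp: shift_unit_def)
  qed
  have PS: "partial_sum ?k' m = partial_sum k m + of_bool (i \<le> m) - of_bool (j \<le> m)" for m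
    using ij by (intro partial_sum_shift_unit) auto
  show "majorized_by n ?k' l"
    unfolding majorized_by_def PS
  proof (intro conjI allI impI)
    fix m assume "m \<le> n"
    then show "partial_sum k m + of_bool (i \<le> m) - of_bool (j \<le> m) \<le> partial_sum l m"
      using kl strict[of m] by (cases "i \<le> m"; cases "j \<le> m") (auto simp: majorized_by_def)
  qed (use kl ij in \<open>simp add: majorized_by_def\<close>)
  show "majorization_gap n ?k' l < majorization_gap n k l"
    unfolding majorization_gap_def
  proof (rule sum_strict_mono_ex1)
    show "\<forall>m\<in>{1..n}.
        nat (partial_sum l m - partial_sum ?k' m) \<le> nat (partial_sum l m - partial_sum k m)"
      unfolding PS using ij by auto
    show "\<exists>m\<in>{1..n}.
        nat (partial_sum l m - partial_sum ?k' m) < nat (partial_sum l m - partial_sum k m)"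
      using strict[of i] ij unfolding PS by (intro bexI[of _ i]) auto
  qed simp
qed

lemma tail_prob_le_if_majorized:
  fixes a :: real
  assumes a: "0 < a" "a < 1" and l: "antimono_on {1..n} l"
    and "antimono_on {1..n} k" "majorized_by n k l"
  shows "tail_prob {1..n} (\<lambda>r. a ^ k r) M \<le> tail_prob {1..n} (\<lambda>r. a ^ l r) M"
  using assms(4,5)
proof (induction k rule: measure_induct_rule[where f = "\<lambda>k. majorization_gap n k l"])
  case (less k)
  show ?case
  proof (cases "\<exists>r\<in>{1..n}. k r \<noteq> l r")
    case False
    then have "tail_prob {1..n} (\<lambda>r. a ^ k r) M = tail_prob {1..n} (\<lambda>r. a ^ l r) M"
      by (intro tail_prob_cong) auto
    then show ?thesis by simp
  next
    case True
    then obtain i j where ij: "1 \<le> i" "i < j" "j \<le> n" "l j < k j"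
      and pivots: "\<And>m. i \<le> m \<Longrightarrow> m < j \<Longrightarrow> partial_sum k m < partial_sum l m"
        "\<And>r. 1 \<le> r \<Longrightarrow> r < i \<Longrightarrow> Suc (k i) \<le> k r"
        "\<And>s. j < s \<Longrightarrow> s \<le> n \<Longrightarrow> Suc (k s) \<le> k j"
      using majorized_by_pivots[OF less.prems(1) l less.prems(2)] by blast
    obtain t where t: "k j = Suc t" "t \<le> k i"
      using ij monotone_onD[OF less.prems(1), of i j] by (cases "k j") auto
    note shift = shift_unit_at_pivots[OF less.prems ij pivots]
    have "tail_prob {1..n} (\<lambda>r. a ^ k r) M \<le> tail_prob {1..n} (\<lambda>r. a ^ shift_unit k j i r) M"
      using a ij t by (intro tail_prob_le_shift_unit) auto
    also have "\<dots> \<le> tail_prob {1..n} (\<lambda>r. a ^ l r) M"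
      using less.IH[OF shift(3,1,2)] .
    finally show ?thesis .
  qed
qed

theorem mainTheorem4:
  fixes a :: real and k l :: "nat \<Rightarrow> nat" and n :: nat and M :: int
  assumes "0 < a" and "a < 1"
    and "\<And>i j. 1 \<le> i \<Longrightarrow> i \<le> j \<Longrightarrow> j \<le> n \<Longrightarrow> k j \<le> k i"
    and "\<And>i j. 1 \<le> i \<Longrightarrow> i \<le> j \<Longrightarrow> j \<le> n \<Longrightarrow> l j \<le> l i"
    and "\<And>j. j \<le> n \<Longrightarrow> (\<Sum>i=1..j. k i) \<le> (\<Sum>i=1..j. l i)"
    and "(\<Sum>i=1..n. k i) = (\<Sum>i=1..n. l i)"
  shows "sum_tail_prob a k n M \<le> sum_tail_prob a l n M"
proof -
  have "antimono_on {1..n} k" "antimono_on {1..n} l"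
    using assms(3,4) by (auto intro!: monotone_onI)
  moreover have "majorized_by n k l"
    using assms(5,6) by (simp add: majorized_by_def partial_sum_def flip: of_nat_sum)
  ultimately show ?thesis
    using tail_prob_le_if_majorized[OF assms(1,2)]
    unfolding sum_tail_prob_def indicator_vector_def tail_prob_def by blast
qed

end
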